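(* Let $H=(U,(A_1,\dots,A_m))$ be a complete harmonic set system with $|U|<m(m-2)$ and $m\ge 51$, such that $H_I=\emptyset$ for every nonconsecutive $I\subseteq[m]$ of size $3$. Then $|U|$ is a nonnegative integer linear combination of $m$, $m+1$, $\binom m2$ and $\frac{(m+1)(m-2)}{2}$.
   Context: For $I\subseteq[m]$, $H_I=\bigcap_{i\in I}A_i$ ($=U$ if $I=\emptyset$). $H$ is complete if $\bigcup_{i=1}^m A_i=U$. The run decomposition of a finite set $I$ of positive integers is the partition of sizes, in nonincreasing order, of the maximal runs of consecutive integers in $I$. $H$ is harmonic if $|H_I|=|H_J|$ whenever $I,J\subseteq[m]$ have the same run decomposition. A set of integers is nonconsecutive if no two distinct elements differ by exactly $1$. *)

theory Defs
  imports Main "HOL-Library.Multiset"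
begin

definition HI :: "'a set \<Rightarrow> (nat \<Rightarrow> 'a set) \<Rightarrow> nat set \<Rightarrow> 'a set" where
  "HI U A I = (if I = {} then U else (\<Inter>i\<in>I. A i))"

definition is_set_system :: "'a set \<Rightarrow> (nat \<Rightarrow> 'a set) \<Rightarrow> nat \<Rightarrow> bool" where
  "is_set_system U A m \<longleftrightarrow> finite U \<and> (\<forall>i\<in>{1..m}. A i \<subseteq> U)"

definition complete_system :: "'a set \<Rightarrow> (nat \<Rightarrow> 'a set) \<Rightarrow> nat \<Rightarrow> bool" where
  "complete_system U A m \<longleftrightarrow> (\<Union>i\<in>{1..m}. A i) = U"

definition runs :: "nat set \<Rightarrow> nat set set" where
  "runs I = {{a..b} | a b. a \<le> b \<and> {a..b} \<subseteq> I \<and> Suc b \<notin> I \<and> (\<forall>c. Suc c = a \<longrightarrow> c \<notin> I)}"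

definition run_decomp :: "nat set \<Rightarrow> nat multiset" where
  "run_decomp I = image_mset card (mset_set (runs I))"

definition harmonic :: "'a set \<Rightarrow> (nat \<Rightarrow> 'a set) \<Rightarrow> nat \<Rightarrow> bool" where
  "harmonic U A m \<longleftrightarrow> (\<forall>I J. I \<subseteq> {1..m} \<longrightarrow> J \<subseteq> {1..m} \<longrightarrow>
      run_decomp I = run_decomp J \<longrightarrow> card (HI U A I) = card (HI U A J))"

definition nonconsecutive :: "nat set \<Rightarrow> bool" where
  "nonconsecutive I \<longleftrightarrow> (\<forall>x\<in>I. \<forall>y\<in>I. y \<noteq> Suc x)"

end

theory Submission
  imports Defs
begin

text \<open>
  Call the set of indices i with x in A_i the trace of x. As no nonconsecutive 3-set is covered,
  every trace is one run of length at most 4 or two runs of length at most 2. By harmonicity the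
  number of elements whose trace contains a pattern T depends only on the run type of T
  (run_hits k for one run of length k, run_pair_hits k l for two runs). Inclusion-exclusion over
  the subsets of each trace expresses |U| in these numbers, and inclusion-exclusion over the
  supersets of {4}, {4,5}, {2,6}, {2,6,7} expresses the numbers p, q, s, t of elements with exactly
  these traces; the number of elements with trace exactly {1} is p + q - s - t. With
  r = run_pair_hits 2 2 one gets 2|U| = 2m p + 2(m+1) q + (m^2-3m-2) s + 2(m+1)(m-2) t + m(m+1) r,
  and the bound |U| < m(m-2) leaves only t = 0, r <= 1, s <= 1; each remaining case is a
  nonnegative combination of m, m+1, m choose 2 and (m+1)(m-2)/2.
\<close>

text \<open>A constant rather than a set comprehension, so that the simplifier can evaluate it on
  explicit finite sets by \<open>count_in_insert\<close>.\<close>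
definition count_in :: "'b set \<Rightarrow> ('b \<Rightarrow> bool) \<Rightarrow> nat" where
  "count_in A P = card {x \<in> A. P x}"

lemma count_in_empty [simp]: "count_in {} P = 0"
  by (simp add: count_in_def)

lemma count_in_insert [simp]:
  assumes "finite A"
  shows "count_in (insert a A) P = (if a \<notin> A \<and> P a then Suc (count_in A P) else count_in A P)"
proof -
  have "{x \<in> insert a A. P x} = (if P a then insert a {x \<in> A. P x} else {x \<in> A. P x})"
    by auto
  then show ?thesis
    using assms by (simp add: count_in_def card_insert_if)
qed

lemma count_in_eq_sum: "finite A \<Longrightarrow> count_in A P = (\<Sum>x\<in>A. of_bool (P x))"
  by (simp add: count_in_def Collect_conj_eq Int_commute)

definition no_nonconsecutive_triple :: "nat set \<Rightarrow> bool" where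
  "no_nonconsecutive_triple S \<longleftrightarrow> \<not> (\<exists>i\<in>S. \<exists>j\<in>S. \<exists>k\<in>S. i + 2 \<le> j \<and> j + 2 \<le> k)"

inductive short_run_shape :: "nat set \<Rightarrow> bool" where
  "short_run_shape {a}"
| "short_run_shape {a, a + 1}"
| "short_run_shape {a, a + 1, a + 2}"
| "short_run_shape {a, a + 1, a + 2, a + 3}"
| "a + 2 \<le> b \<Longrightarrow> short_run_shape {a, b}"
| "a + 2 \<le> b \<Longrightarrow> short_run_shape {a, b, b + 1}"
| "a + 3 \<le> b \<Longrightarrow> short_run_shape {a, a + 1, b}"
| "a + 3 \<le> b \<Longrightarrow> short_run_shape {a, a + 1, b, b + 1}"

lemma short_run_shape_if_subset_window:
  assumes "a \<in> S" "S \<subseteq> {a..a + 3}"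
  shows "short_run_shape S"
proof -
  have S: "S = insert a ({a + 1, a + 2, a + 3} \<inter> S)"
    using assms by force
  show ?thesis
  proof (cases "a + 1 \<in> S"; cases "a + 2 \<in> S"; cases "a + 3 \<in> S")
    assume "a + 1 \<in> S" "a + 2 \<in> S" "a + 3 \<in> S"
    then show ?thesis using S short_run_shape.intros(4)[of a] by (simp add: eval_nat_numeral)
  next
    assume "a + 1 \<in> S" "a + 2 \<in> S" "a + 3 \<notin> S"
    then show ?thesis using S short_run_shape.intros(3)[of a] by (simp add: eval_nat_numeral)
  next
    assume "a + 1 \<in> S" "a + 2 \<notin> S" "a + 3 \<in> S"
    then show ?thesis using S short_run_shape.intros(7)[of a "a + 3"] by (simp add: eval_nat_numeral)
  next
    assume "a + 1 \<in> S" "a + 2 \<notin> S" "a + 3 \<notin> S"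
    then show ?thesis using S short_run_shape.intros(2)[of a] by (simp add: eval_nat_numeral)
  next
    assume "a + 1 \<notin> S" "a + 2 \<in> S" "a + 3 \<in> S"
    then show ?thesis using S short_run_shape.intros(6)[of a "a + 2"] by (simp add: eval_nat_numeral)
  next
    assume "a + 1 \<notin> S" "a + 2 \<in> S" "a + 3 \<notin> S"
    then show ?thesis using S short_run_shape.intros(5)[of a "a + 2"] by (simp add: eval_nat_numeral)
  next
    assume "a + 1 \<notin> S" "a + 2 \<notin> S" "a + 3 \<in> S"
    then show ?thesis using S short_run_shape.intros(5)[of a "a + 3"] by (simp add: eval_nat_numeral)
  next
    assume "a + 1 \<notin> S" "a + 2 \<notin> S" "a + 3 \<notin> S"
    then show ?thesis using S short_run_shape.intros(1)[of a] by simp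
  qed
qed

lemma short_run_shape_if_subset_ends:
  assumes "a + 3 \<le> w" "a \<in> S" "w + 1 \<in> S" "S \<subseteq> {a, a + 1, w, w + 1}"
  shows "short_run_shape S"
proof -
  have S: "S = {a, w + 1} \<union> ({a + 1, w} \<inter> S)"
    using assms by blast
  show ?thesis
  proof (cases "a + 1 \<in> S"; cases "w \<in> S")
    assume "a + 1 \<in> S" "w \<in> S"
    then show ?thesis using S assms(1) short_run_shape.intros(8)[of a w] by (simp add: insert_commute)
  next
    assume "a + 1 \<in> S" "w \<notin> S"
    then show ?thesis using S assms(1) short_run_shape.intros(7)[of a "w + 1"] by (simp add: insert_commute)
  next
    assume "a + 1 \<notin> S" "w \<in> S"
    then show ?thesis using S assms(1) short_run_shape.intros(6)[of a w] by (simp add: insert_commute)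
  next
    assume "a + 1 \<notin> S" "w \<notin> S"
    then show ?thesis using S assms(1) short_run_shape.intros(5)[of a "w + 1"] by simp
  qed
qed

text \<open>Every element of such a set lies within distance one of its minimum or of its maximum.\<close>
lemma short_run_shape_if_no_nonconsecutive_triple:
  assumes "finite S" "S \<noteq> {}" "no_nonconsecutive_triple S"
  shows "short_run_shape S"
proof -
  define a z where "a = Min S" and "z = Max S"
  have a: "a \<in> S" and z: "z \<in> S" and bounds: "\<And>y. y \<in> S \<Longrightarrow> a \<le> y \<and> y \<le> z"
    using assms(1,2) by (auto simp: a_def z_def)
  have near_ends: "y \<le> a + 1 \<or> z \<le> y + 1" if "y \<in> S" for y
    using assms(3) a z that unfolding no_nonconsecutive_triple_def by force
  show ?thesis
  proof (cases "z \<le> a + 3")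
    case True
    then show ?thesis
      using a by (intro short_run_shape_if_subset_window) (auto dest!: bounds)
  next
    case False
    then have "z = (z - 1) + 1" "a + 3 \<le> z - 1"
      by simp_all
    then show ?thesis
      using a z bounds near_ends by (intro short_run_shape_if_subset_ends[of a "z - 1"]) fastforce+
  qed
qed

definition run_count :: "nat \<Rightarrow> nat set \<Rightarrow> nat" where
  "run_count k S = count_in S (\<lambda>i. {i..<i + k} \<subseteq> S)"

definition run_pair_count :: "nat \<Rightarrow> nat \<Rightarrow> nat set \<Rightarrow> nat" where
  "run_pair_count k l S =
     count_in (S \<times> S) (\<lambda>(i, j). i + k < j \<and> {i..<i + k} \<subseteq> S \<and> {j..<j + l} \<subseteq> S)"

lemma run_pair_count_eq_sum:
  assumes "finite S"
  shows "run_pair_count k l S =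
    (\<Sum>i\<in>S. count_in S (\<lambda>j. i + k < j \<and> {i..<i + k} \<subseteq> S \<and> {j..<j + l} \<subseteq> S))"
proof -
  have "{p \<in> S \<times> S. case p of (i, j) \<Rightarrow> i + k < j \<and> {i..<i + k} \<subseteq> S \<and> {j..<j + l} \<subseteq> S}
      = Sigma S (\<lambda>i. {j \<in> S. i + k < j \<and> {i..<i + k} \<subseteq> S \<and> {j..<j + l} \<subseteq> S})"
    by auto
  then show ?thesis
    using assms by (simp add: run_pair_count_def count_in_def)
qed

text \<open>The left-hand side is \<open>\<Sum>T. (-1)^(card T + 1)\<close> over the nonempty \<open>T \<subseteq> S\<close>, grouped by
  the run structure of \<open>T\<close>; for these shapes every such \<open>T\<close> has one of the eight listed types.\<close>
lemma alternating_run_count: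
  assumes "short_run_shape S"
  shows "int (run_count 1 S) - int (run_count 2 S) + int (run_count 3 S) - int (run_count 4 S)
    - int (run_pair_count 1 1 S) + int (run_pair_count 1 2 S) + int (run_pair_count 2 1 S)
    - int (run_pair_count 2 2 S) = 1"
  using assms
  by cases (simp_all add: run_count_def run_pair_count_eq_sum atLeastLessThanSuc eval_nat_numeral)

text \<open>Each weight below is the inclusion-exclusion expression for the event that \<open>S\<close> equals
  the pattern \<open>{4}\<close>, \<open>{4, 5}\<close>, \<open>{1}\<close>, \<open>{2, 6}\<close> resp. \<open>{2, 6, 7}\<close>, restricted to the supersets of
  the pattern that a trace can contain; its nonnegativity on traces is checked shape by shape.\<close>

definition far_run_count :: "nat \<Rightarrow> nat \<Rightarrow> nat \<Rightarrow> nat set \<Rightarrow> nat" where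
  "far_run_count a k l S =
     count_in S (\<lambda>j. {a..<a + k} \<subseteq> S \<and> {j..<j + l} \<subseteq> S \<and> (j + l < a \<or> a + k < j))"

definition interior_singleton_weight :: "nat set \<Rightarrow> int" where
  "interior_singleton_weight S = 1
    - of_bool ({3} \<subseteq> S) - of_bool ({5} \<subseteq> S)
    + of_bool ({2, 3} \<subseteq> S) + of_bool ({3, 5} \<subseteq> S) + of_bool ({5, 6} \<subseteq> S)
    - of_bool ({1, 2, 3} \<subseteq> S) - of_bool ({2, 3, 5} \<subseteq> S) - of_bool ({3, 5, 6} \<subseteq> S)
    - of_bool ({5, 6, 7} \<subseteq> S)
    - int (far_run_count 4 1 1 S) + int (far_run_count 4 1 2 S)
    + int (far_run_count 3 2 1 S) + int (far_run_count 4 2 1 S)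
    - int (far_run_count 3 2 2 S) - int (far_run_count 4 2 2 S)"

lemma interior_singleton_weight_nonneg:
  assumes "short_run_shape S" "4 \<in> S" "0 \<notin> S"
  shows "0 \<le> interior_singleton_weight S"
  using assms
  by (induction; simp only: insert_iff singleton_iff empty_iff simp_thms; (elim disjE conjE)?;
      simp add: interior_singleton_weight_def far_run_count_def atLeastLessThanSuc eval_nat_numeral)

definition interior_pair_weight :: "nat set \<Rightarrow> int" where
  "interior_pair_weight S = 1
    - of_bool ({3} \<subseteq> S) - of_bool ({6} \<subseteq> S)
    + of_bool ({2, 3} \<subseteq> S) + of_bool ({3, 6} \<subseteq> S) + of_bool ({6, 7} \<subseteq> S)
    - int (far_run_count 4 2 1 S) + int (far_run_count 4 2 2 S)"

lemma interior_pair_weight_nonneg: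
  assumes "short_run_shape S" "{4, 5} \<subseteq> S"
  shows "0 \<le> interior_pair_weight S"
  using assms
  by (induction; simp only: insert_subset insert_iff singleton_iff empty_iff simp_thms;
      (elim disjE conjE)?;
      simp add: interior_pair_weight_def far_run_count_def atLeastLessThanSuc eval_nat_numeral)

definition boundary_singleton_weight :: "nat set \<Rightarrow> int" where
  "boundary_singleton_weight S = 1
    - of_bool ({2} \<subseteq> S) + of_bool ({2, 3} \<subseteq> S) - of_bool ({2, 3, 4} \<subseteq> S)
    - int (far_run_count 1 1 1 S) + int (far_run_count 1 1 2 S)
    + int (far_run_count 1 2 1 S) - int (far_run_count 1 2 2 S)"

lemma boundary_singleton_weight_nonneg:
  assumes "short_run_shape S" "1 \<in> S" "0 \<notin> S"
  shows "0 \<le> boundary_singleton_weight S"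
  using assms
  by (induction; simp only: insert_iff singleton_iff empty_iff simp_thms; (elim disjE conjE)?;
      simp add: boundary_singleton_weight_def far_run_count_def atLeastLessThanSuc eval_nat_numeral)

definition two_singletons_weight :: "nat set \<Rightarrow> int" where
  "two_singletons_weight S = 1
    - of_bool ({1} \<subseteq> S) - of_bool ({3} \<subseteq> S) - of_bool ({5} \<subseteq> S) - of_bool ({7} \<subseteq> S)
    + of_bool ({1, 5} \<subseteq> S) + of_bool ({1, 7} \<subseteq> S) + of_bool ({3, 5} \<subseteq> S)
    + of_bool ({3, 7} \<subseteq> S)"

lemma two_singletons_weight_nonneg:
  "\<not> {1, 3} \<subseteq> S \<Longrightarrow> \<not> {5, 7} \<subseteq> S \<Longrightarrow> 0 \<le> two_singletons_weight S"
  by (auto simp: two_singletons_weight_def)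

definition singleton_pair_weight :: "nat set \<Rightarrow> int" where
  "singleton_pair_weight S = 1 - of_bool ({1} \<subseteq> S) - of_bool ({3} \<subseteq> S)"

lemma singleton_pair_weight_nonneg: "\<not> {1, 3} \<subseteq> S \<Longrightarrow> 0 \<le> singleton_pair_weight S"
  by (auto simp: singleton_pair_weight_def)

lemma runs_atLeastAtMost:
  assumes "a \<le> (b :: nat)"
  shows "runs {a..b} = {{a..b}}"
proof -
  have "X \<in> runs {a..b} \<longleftrightarrow> X = {a..b}" for X
  proof
    assume "X \<in> runs {a..b}"
    then obtain a' b' where X: "X = {a'..b'}" "a' \<le> b'" "{a'..b'} \<subseteq> {a..b}" "Suc b' \<notin> {a..b}"
      "\<forall>c. Suc c = a' \<longrightarrow> c \<notin> {a..b}"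
      unfolding runs_def by blast
    then have "a' = a"
      by (cases a') auto
    moreover have "b' = b"
      using X by auto
    ultimately show "X = {a..b}"
      using X(1) by simp
  next
    assume "X = {a..b}"
    then show "X \<in> runs {a..b}"
      unfolding runs_def using assms by auto
  qed
  then show ?thesis
    by blast
qed

lemma runs_Un_atLeastAtMost:
  assumes "a \<le> (b :: nat)" "b + 2 \<le> c" "c \<le> d"
  shows "runs ({a..b} \<union> {c..d}) = {{a..b}, {c..d}}"
proof -
  let ?I = "{a..b} \<union> {c..d}"
  have "X \<in> runs ?I \<longleftrightarrow> X = {a..b} \<or> X = {c..d}" for X
  proof
    assume "X \<in> runs ?I"
    then obtain a' b' where X: "X = {a'..b'}" "a' \<le> b'" "{a'..b'} \<subseteq> ?I" "Suc b' \<notin> ?I"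
      "\<forall>c. Suc c = a' \<longrightarrow> c \<notin> ?I"
      unfolding runs_def by blast
    have ends: "a' \<in> ?I" "b' \<in> ?I"
      using X(2,3) by auto
    show "X = {a..b} \<or> X = {c..d}"
    proof (cases "a' \<le> b")
      case True
      then have "a' = a"
        using ends(1) X(5) assms by (cases a') auto
      moreover have "b' \<le> b"
      proof (rule ccontr)
        assume "\<not> b' \<le> b"
        then have "Suc b \<in> {a'..b'}"
          using \<open>a' = a\<close> assms by auto
        then show False
          using X(3) assms by auto
      qed
      ultimately show ?thesis
        using X(1,2,4) by auto
    next
      case False
      then have "a' = c"
        using ends(1) X(5) assms by (cases a') auto
      moreover have "b' = d"
        using ends(2) X(2,4) False by auto
      ultimately show ?thesis
        using X(1) by simp
    qed
  next
    assume "X = {a..b} \<or> X = {c..d}"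
    then show "X \<in> runs ?I"
      unfolding runs_def using assms by auto
  qed
  then show ?thesis
    by blast
qed

lemma run_decomp_atLeastAtMost: "a \<le> (b :: nat) \<Longrightarrow> run_decomp {a..b} = {#Suc b - a#}"
  by (simp add: run_decomp_def runs_atLeastAtMost)

lemma run_decomp_Un_atLeastAtMost:
  assumes "a \<le> (b :: nat)" "b + 2 \<le> c" "c \<le> d"
  shows "run_decomp ({a..b} \<union> {c..d}) = {#Suc b - a, Suc d - c#}"
proof -
  have "{a..b} \<noteq> {c..d}"
    using assms by (auto simp: set_eq_iff)
  then show ?thesis
    using assms by (simp add: run_decomp_def runs_Un_atLeastAtMost)
qed

lemma eq_atLeastLessThan_Min_card:
  fixes A :: "nat set"
  assumes "finite A" "A \<noteq> {}" "card A = Suc (Max A) - Min A"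
  shows "A = {Min A..<Min A + card A}"
proof -
  have "A \<subseteq> {Min A..Max A}"
    using assms(1) by (simp add: subset_eq)
  then have "A = {Min A..Max A}"
    using assms(3) by (intro card_subset_eq) simp_all
  moreover have "Min A \<le> Max A"
    using assms(1,2) by simp
  ultimately show ?thesis
    using assms(3) by (simp add: atLeastLessThanSuc_atLeastAtMost)
qed

lemma card_pairs_with_gap: "card {(i, j). 0 < i \<and> i + g \<le> j \<and> j \<le> n} = (n + 1 - g) choose 2"
proof (induction n)
  case 0
  have "{(i, j). 0 < i \<and> i + g \<le> j \<and> j \<le> (0 :: nat)} = {}"
    by auto
  moreover have "(0 + 1 - g) choose 2 = 0"
    by (simp add: binomial_eq_0)
  ultimately show ?case
    by (metis card.empty)
next
  case (Suc n)
  have finite: "finite {(i, j). 0 < i \<and> i + g \<le> j \<and> j \<le> n}"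
    by (rule finite_subset[of _ "{0..n} \<times> {0..n}"]) auto
  have "{(i, j). 0 < i \<and> i + g \<le> j \<and> j \<le> Suc n}
      = {(i, j). 0 < i \<and> i + g \<le> j \<and> j \<le> n} \<union> (\<lambda>i. (i, Suc n)) ` {1..Suc n - g}"
    by auto
  then have "card {(i, j). 0 < i \<and> i + g \<le> j \<and> j \<le> Suc n}
      = card {(i, j). 0 < i \<and> i + g \<le> j \<and> j \<le> n} + card ((\<lambda>i. (i, Suc n)) ` {1..Suc n - g})"
    using finite by (simp only:) (rule card_Un_disjoint, auto)
  also have "\<dots> = ((n + 1 - g) choose 2) + (Suc n - g)"
    using Suc by (simp add: card_image inj_on_def)
  also have "\<dots> = (Suc n + 1 - g) choose 2"
    by (cases "g \<le> Suc n") (simp_all add: Suc_diff_le numeral_2_eq_2)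
  finally show ?case .
qed

lemma two_mul_choose_two: "2 * (n choose 2) = n * (n - 1)"
  by (cases n) (simp_all add: choose_two)

lemma two_mul_int_choose_two: "2 * int (n choose 2) = int n * (int n - 1)"
proof -
  have "int (2 * (n choose 2)) = int (n * (n - 1))"
    by (simp only: two_mul_choose_two)
  then show ?thesis
    by (cases n) (simp_all add: algebra_simps)
qed

lemma nat_combination_if_int_combination:
  fixes n m :: nat and a b c d :: int
  assumes "2 \<le> m" "0 \<le> a" "0 \<le> b" "0 \<le> c" "0 \<le> d"
    and "2 * int n = 2 * a * int m + 2 * b * (int m + 1) + c * (int m * (int m - 1))
      + d * ((int m + 1) * (int m - 2))"
  shows "\<exists>a b c d :: nat. n = a * m + b * (m + 1) + c * (m choose 2) + d * ((m + 1) * (m - 2) div 2)"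
proof -
  define C D where "C = m choose 2" and "D = (m + 1) * (m - 2) div 2"
  have "int (2 * C) = int (m * (m - 1))"
    unfolding C_def by (simp only: two_mul_choose_two)
  then have C: "2 * int C = int m * (int m - 1)"
    using assms(1) by simp
  obtain k where k: "m = k + 2"
    using assms(1) le_Suc_ex by (metis add.commute)
  have "even ((k + 3) * k)"
    by simp
  then have "int (2 * D) = int ((k + 3) * k)"
    unfolding D_def k by (simp add: algebra_simps)
  then have D: "2 * int D = (int m + 1) * (int m - 2)"
    unfolding k by (simp add: algebra_simps)
  have "c * (int m * (int m - 1)) = 2 * (c * int C)" "d * ((int m + 1) * (int m - 2)) = 2 * (d * int D)"
    using C D by simp_all
  then have "int n = a * int m + b * (int m + 1) + c * int C + d * int D"
    using assms(6) by linarith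
  also have "\<dots> = int (nat a * m + nat b * (m + 1) + nat c * C + nat d * D)"
    using assms(2-5) by (simp add: algebra_simps)
  finally have "n = nat a * m + nat b * (m + 1) + nat c * C + nat d * D"
    by (simp only: of_nat_eq_iff)
  then show ?thesis
    unfolding C_def D_def by blast
qed

text \<open>All five summands are nonnegative while \<open>2 n < 2 M (M - 2)\<close>, so the coefficients are small.\<close>

context
  fixes M n p1 p2 q11 q12 r :: int
  assumes M: "4 \<le> M" and lt: "n < M * (M - 2)"
    and nonneg: "0 \<le> p1" "0 \<le> p2" "0 \<le> q11" "0 \<le> q12" "0 \<le> r"
    and weighted_sum: "2 * n = 2 * M * p1 + 2 * (M + 1) * p2 + (M * M - 3 * M - 2) * q11
      + 2 * (M + 1) * (M - 2) * q12 + M * (M + 1) * r"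
begin

lemma weighted_sum_expanded:
  shows "2 * n = 2 * (M * p1) + 2 * (M * p2) + 2 * p2 + (M * M - 3 * M - 2) * q11
      + 2 * ((M + 1) * (M - 2) * q12) + M * (M + 1) * r"
    and "n < M * M - 2 * M" "0 \<le> M * M - 3 * M - 2"
    and "0 \<le> M * p1" "0 \<le> M * p2" "0 \<le> (M * M - 3 * M - 2) * q11"
      "0 \<le> (M + 1) * (M - 2) * q12" "0 \<le> M * (M + 1) * r"
proof -
  show "2 * n = 2 * (M * p1) + 2 * (M * p2) + 2 * p2 + (M * M - 3 * M - 2) * q11
      + 2 * ((M + 1) * (M - 2) * q12) + M * (M + 1) * r" "n < M * M - 2 * M"
    using weighted_sum lt by (simp_all add: algebra_simps)
  have "4 * M \<le> M * M"
    using M by (intro mult_right_mono) auto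
  then show c: "0 \<le> M * M - 3 * M - 2"
    using M by linarith
  show "0 \<le> M * p1" "0 \<le> M * p2" "0 \<le> (M * M - 3 * M - 2) * q11"
    "0 \<le> (M + 1) * (M - 2) * q12" "0 \<le> M * (M + 1) * r"
    using M c nonneg by (auto intro!: mult_nonneg_nonneg)
qed

lemma weighted_sum_r_le_1: "r \<le> 1"
proof (rule ccontr)
  assume "\<not> r \<le> 1"
  then have "M * (M + 1) * 2 \<le> M * (M + 1) * r"
    using M by (intro mult_left_mono) auto
  moreover have "M * (M + 1) * 2 = 2 * (M * M) + 2 * M"
    by (simp add: algebra_simps)
  ultimately show False
    using weighted_sum_expanded M nonneg by linarith
qed

lemma weighted_sum_q12_eq_0: "q12 = 0"
proof (rule ccontr)
  assume "q12 \<noteq> 0"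
  then have "(M + 1) * (M - 2) \<le> (M + 1) * (M - 2) * q12"
    using M nonneg mult_left_mono[of 1 q12 "(M + 1) * (M - 2)"] by simp
  moreover have "(M + 1) * (M - 2) = M * M - M - 2"
    by (simp add: algebra_simps)
  ultimately show False
    using weighted_sum_expanded M nonneg by linarith
qed

lemma weighted_sum_q11_eq_0_if_r_eq_1:
  assumes "r = 1"
  shows "q11 = 0"
proof (rule ccontr)
  assume "q11 \<noteq> 0"
  then have "M * M - 3 * M - 2 \<le> (M * M - 3 * M - 2) * q11"
    using weighted_sum_expanded(3) nonneg mult_left_mono[of 1 q11 "M * M - 3 * M - 2"] by simp
  moreover have "M * (M + 1) * r = M * M + M"
    using assms by (simp add: algebra_simps)
  ultimately show False
    using weighted_sum_expanded M nonneg by linarith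
qed

lemma weighted_sum_q11_le_1:
  assumes "q11 + q12 \<le> p1 + p2"
  shows "q11 \<le> 1"
proof (rule ccontr)
  assume "\<not> q11 \<le> 1"
  then have "2 * (M * M - 3 * M - 2) \<le> (M * M - 3 * M - 2) * q11" "2 * M \<le> M * p1 + M * p2"
    using weighted_sum_expanded(3) M assms weighted_sum_q12_eq_0
      mult_left_mono[of 2 q11 "M * M - 3 * M - 2"] mult_left_mono[of 2 "p1 + p2" M]
    by (simp_all add: algebra_simps)
  then show False
    using weighted_sum_expanded M nonneg weighted_sum_q12_eq_0 by (smt (verit))
qed

end

lemma nat_combination_if_weighted_sum_small:
  fixes n m :: nat and p1 p2 q11 q12 r :: int
  assumes "4 \<le> m" "n < m * (m - 2)"
    and "0 \<le> p1" "0 \<le> p2" "0 \<le> q11" "0 \<le> q12" "0 \<le> r" "q11 + q12 \<le> p1 + p2"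
    and sum: "2 * int n = 2 * int m * p1 + 2 * (int m + 1) * p2 + (int m * int m - 3 * int m - 2) * q11
      + 2 * (int m + 1) * (int m - 2) * q12 + int m * (int m + 1) * r"
  shows "\<exists>a b c d :: nat. n = a * m + b * (m + 1) + c * (m choose 2) + d * ((m + 1) * (m - 2) div 2)"
proof -
  have "int n < int (m * (m - 2))"
    using assms(2) by (simp only: of_nat_less_iff)
  then have "int n < int m * (int m - 2)"
    using assms(1) by simp
  note small = this assms(3-7) sum
  have M: "4 \<le> int m"
    using assms(1) by simp
  have q12: "q12 = 0" and "r \<le> 1" "r = 1 \<Longrightarrow> q11 = 0" "q11 \<le> 1"
    using weighted_sum_q12_eq_0[OF M small] weighted_sum_r_le_1[OF M small]
      weighted_sum_q11_eq_0_if_r_eq_1[OF M small] weighted_sum_q11_le_1[OF M small assms(8)]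
    by auto
  then consider "r = 1" "q11 = 0" | "r = 0" "q11 = 0" | "r = 0" "q11 = 1" "1 \<le> p1"
    | "r = 0" "q11 = 1" "1 \<le> p2"
    using assms(5,7,8) by linarith
  then show ?thesis
  proof cases
    case 1
    then show ?thesis
      using assms(1,3,4) sum q12
      by (intro nat_combination_if_int_combination[of m "p1 + 1" p2 1 0]) (simp_all add: algebra_simps)
  next
    case 2
    then show ?thesis
      using assms(1,3,4) sum q12
      by (intro nat_combination_if_int_combination[of m p1 p2 0 0]) (simp_all add: algebra_simps)
  next
    case 3
    then show ?thesis
      using assms(1,3,4) sum q12
      by (intro nat_combination_if_int_combination[of m "p1 - 1" p2 0 1]) (simp_all add: algebra_simps)
  next
    case 4
    then show ?thesis
      using assms(1,3,4) sum q12
      by (intro nat_combination_if_int_combination[of m p1 "p2 - 1" 1 0]) (simp_all add: algebra_simps)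
  qed
qed

locale harmonic_trace_system =
  fixes U :: "'a set" and A :: "nat \<Rightarrow> 'a set" and m :: nat
  assumes finite_U: "finite U"
    and complete: "complete_system U A m"
    and harmonic: "harmonic U A m"
    and nonconsecutive_triple_empty:
      "\<And>I. I \<subseteq> {1..m} \<Longrightarrow> card I = 3 \<Longrightarrow> nonconsecutive I \<Longrightarrow> HI U A I = {}"
    and seven_le_m: "7 \<le> m"
begin

definition trace :: "'a \<Rightarrow> nat set" where
  "trace x = {i \<in> {1..m}. x \<in> A i}"

definition hitting :: "nat set \<Rightarrow> 'a set" where
  "hitting T = {x \<in> U. T \<subseteq> trace x}"

abbreviation hits :: "nat set \<Rightarrow> nat" where
  "hits T \<equiv> card (hitting T)"

lemma trace_subset: "trace x \<subseteq> {1..m}"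
  by (auto simp: trace_def)

lemma finite_trace: "finite (trace x)"
  using finite_subset[OF trace_subset] by blast

lemma finite_hitting: "finite (hitting T)"
  using finite_U by (simp add: hitting_def)

lemma hitting_empty [simp]: "hitting {} = U"
  by (simp add: hitting_def)

lemma hitting_Un: "{x \<in> hitting W. T \<subseteq> trace x} = hitting (W \<union> T)"
  by (auto simp: hitting_def)

lemma HI_eq_hitting:
  assumes "T \<noteq> {}" "T \<subseteq> {1..m}"
  shows "HI U A T = hitting T"
proof -
  have "x \<in> U" if "x \<in> A i" "i \<in> T" for x i
    using complete that assms(2) by (auto simp: complete_system_def)
  then show ?thesis
    using assms by (auto simp: HI_def hitting_def trace_def)
qed

lemma zero_notin_trace: "0 \<notin> trace x"
  by (simp add: trace_def)

lemma no_nonconsecutive_triple_trace: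
  assumes "x \<in> U"
  shows "no_nonconsecutive_triple (trace x)"
  unfolding no_nonconsecutive_triple_def
proof clarify
  fix i j k
  assume ijk: "i \<in> trace x" "j \<in> trace x" "k \<in> trace x" "i + 2 \<le> j" "j + 2 \<le> k"
  then have sub: "{i, j, k} \<subseteq> {1..m}"
    using trace_subset by blast
  have "card {i, j, k} = 3" "nonconsecutive {i, j, k}"
    using ijk(4,5) by (auto simp: nonconsecutive_def)
  then have "HI U A {i, j, k} = {}"
    using sub nonconsecutive_triple_empty by blast
  moreover have "HI U A {i, j, k} = hitting {i, j, k}"
    using sub by (intro HI_eq_hitting) auto
  moreover have "x \<in> hitting {i, j, k}"
    using assms ijk by (simp add: hitting_def)
  ultimately show False
    by simp
qed

lemma short_run_shape_trace:
  assumes "x \<in> U"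
  shows "short_run_shape (trace x)"
proof (rule short_run_shape_if_no_nonconsecutive_triple)
  show "trace x \<noteq> {}"
    using complete assms by (auto simp: complete_system_def trace_def)
qed (use assms finite_trace no_nonconsecutive_triple_trace in auto)

lemma hits_eq_if_run_decomp_eq:
  assumes "T \<noteq> {}" "T' \<noteq> {}" "T \<subseteq> {1..m}" "T' \<subseteq> {1..m}" "run_decomp T = run_decomp T'"
  shows "hits T = hits T'"
  using harmonic assms HI_eq_hitting unfolding harmonic_def by metis

definition run_hits :: "nat \<Rightarrow> nat" where
  "run_hits k = hits {1..k}"

definition run_pair_hits :: "nat \<Rightarrow> nat \<Rightarrow> nat" where
  "run_pair_hits k l = hits ({1..k} \<union> {k + 2..k + l + 1})"

lemma hits_run:
  assumes "T = {a..<a + k}" "0 < a" "0 < k" "a + k \<le> m + 1"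
  shows "hits T = run_hits k"
proof -
  obtain k' where k: "k = Suc k'"
    using assms(3) gr0_conv_Suc by blast
  have "T = {a..a + k'}"
    using assms(1) k by auto
  then show ?thesis
    unfolding run_hits_def
    using assms k by (intro hits_eq_if_run_decomp_eq) (auto simp: run_decomp_atLeastAtMost)
qed

lemma hits_run_pair:
  assumes "T = {a..<a + k} \<union> {b..<b + l}" "0 < a" "0 < k" "0 < l" "a + k < b" "b + l \<le> m + 1"
  shows "hits T = run_pair_hits k l"
proof -
  obtain k' l' where k: "k = Suc k'" and l: "l = Suc l'"
    using assms(3,4) gr0_conv_Suc by blast
  have "T = {a..a + k'} \<union> {b..b + l'}"
    using assms(1) k l by auto
  then show ?thesis
    unfolding run_pair_hits_def
    using assms k l
    by (intro hits_eq_if_run_decomp_eq) (auto simp: run_decomp_Un_atLeastAtMost)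
qed

lemma run_pair_hits_commute:
  assumes "0 < k" "0 < l" "k + l < m"
  shows "run_pair_hits k l = run_pair_hits l k"
proof -
  have "run_decomp ({1..k} \<union> {k + 2..k + l + 1}) = {#k, l#}"
    "run_decomp ({1..l} \<union> {l + 2..l + k + 1}) = {#l, k#}"
    using assms by (simp_all add: run_decomp_Un_atLeastAtMost)
  then show ?thesis
    unfolding run_pair_hits_def using assms
    by (intro hits_eq_if_run_decomp_eq) (auto simp: add_mset_commute)
qed

lemma sum_count_in_patterns:
  assumes "finite J"
  shows "(\<Sum>x\<in>hitting W. count_in J (\<lambda>p. T p \<subseteq> trace x)) = (\<Sum>p\<in>J. hits (W \<union> T p))"
proof -
  have "(\<Sum>x\<in>hitting W. count_in J (\<lambda>p. T p \<subseteq> trace x))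
      = (\<Sum>x\<in>hitting W. \<Sum>p\<in>J. of_bool (T p \<subseteq> trace x))"
    using assms by (simp add: count_in_eq_sum)
  also have "\<dots> = (\<Sum>p\<in>J. \<Sum>x\<in>hitting W. of_bool (T p \<subseteq> trace x))"
    by (rule sum.swap)
  also have "\<dots> = (\<Sum>p\<in>J. count_in (hitting W) (\<lambda>x. T p \<subseteq> trace x))"
    using finite_hitting by (simp add: count_in_eq_sum)
  also have "\<dots> = (\<Sum>p\<in>J. hits (W \<union> T p))"
    by (simp add: count_in_def hitting_Un)
  finally show ?thesis .
qed

lemma sum_count_in_patterns_const:
  assumes "finite J" "card J = k" "\<And>p. p \<in> J \<Longrightarrow> hits (W \<union> T p) = v"
    and "\<And>x. x \<in> hitting W \<Longrightarrow> f x = count_in J (\<lambda>p. T p \<subseteq> trace x)"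
  shows "(\<Sum>x\<in>hitting W. f x) = k * v"
proof -
  have "(\<Sum>x\<in>hitting W. f x) = (\<Sum>x\<in>hitting W. count_in J (\<lambda>p. T p \<subseteq> trace x))"
    using assms(4) by (rule sum.cong[OF refl])
  also have "\<dots> = (\<Sum>p\<in>J. hits (W \<union> T p))"
    by (rule sum_count_in_patterns[OF assms(1)])
  finally show ?thesis
    using assms(2,3) by simp
qed

lemma run_subset_trace:
  assumes "0 < k" "{i..<i + k} \<subseteq> trace x"
  shows "i \<in> trace x" "0 < i" "i + k \<le> m + 1"
proof -
  have "i \<in> {i..<i + k}" "i + k - 1 \<in> {i..<i + k}"
    using assms(1) by auto
  then show "i \<in> trace x" "0 < i" "i + k \<le> m + 1"
    using assms(2) trace_subset[of x] by force+
qed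

lemma sum_run_count:
  assumes "0 < k"
  shows "(\<Sum>x\<in>U. run_count k (trace x)) = (m + 1 - k) * run_hits k"
proof -
  have "(\<Sum>x\<in>hitting {}. run_count k (trace x)) = (m + 1 - k) * run_hits k"
  proof (rule sum_count_in_patterns_const[where J = "{1..m + 1 - k}" and T = "\<lambda>i. {i..<i + k}"])
    show "hits ({} \<union> {i..<i + k}) = run_hits k" if "i \<in> {1..m + 1 - k}" for i
      using that assms by (intro hits_run[of _ i]) auto
    show "run_count k (trace x) = count_in {1..m + 1 - k} (\<lambda>i. {i..<i + k} \<subseteq> trace x)" for x
      unfolding run_count_def count_in_def using run_subset_trace[OF assms]
      by (intro arg_cong[where f = card]) fastforce
  qed auto
  then show ?thesis
    by simp
qed

lemma sum_run_pair_count: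
  assumes "0 < k" "0 < l"
  shows "(\<Sum>x\<in>U. run_pair_count k l (trace x)) = ((m + 1 - k - l) choose 2) * run_pair_hits k l"
proof -
  let ?J = "{(i, j). 0 < i \<and> i + k < j \<and> j + l \<le> m + 1}"
  have J: "?J = {(i, j). 0 < i \<and> i + Suc k \<le> j \<and> j \<le> m + 1 - l}"
    by auto
  have "(\<Sum>x\<in>hitting {}. run_pair_count k l (trace x)) = ((m + 1 - k - l) choose 2) * run_pair_hits k l"
  proof (rule sum_count_in_patterns_const[where J = ?J and T = "\<lambda>(i, j). {i..<i + k} \<union> {j..<j + l}"])
    show "finite ?J"
      by (rule finite_subset[of _ "{0..m} \<times> {0..m}"]) (use assms(2) in auto)
    show "card ?J = (m + 1 - k - l) choose 2"
      unfolding J card_pairs_with_gap by (simp add: diff_diff_add add.commute)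
    show "hits ({} \<union> (case p of (i, j) \<Rightarrow> {i..<i + k} \<union> {j..<j + l})) = run_pair_hits k l"
      if "p \<in> ?J" for p
    proof (cases p)
      case (Pair i j)
      then show ?thesis
        using that assms by (intro hits_run_pair[of _ i k j l]) auto
    qed
    show "run_pair_count k l (trace x)
        = count_in ?J (\<lambda>p. (case p of (i, j) \<Rightarrow> {i..<i + k} \<union> {j..<j + l}) \<subseteq> trace x)" for x
    proof -
      have "i \<in> trace x \<and> j \<in> trace x \<and> i + k < j \<and> {i..<i + k} \<subseteq> trace x \<and> {j..<j + l} \<subseteq> trace x
          \<longleftrightarrow> (0 < i \<and> i + k < j \<and> j + l \<le> m + 1) \<and> {i..<i + k} \<union> {j..<j + l} \<subseteq> trace x" for i j
        using run_subset_trace[OF assms(1), of i x] run_subset_trace[OF assms(2), of j x] by auto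
      then show ?thesis
        unfolding run_pair_count_def count_in_def by (intro arg_cong[where f = card]) auto
    qed
  qed
  then show ?thesis
    by simp
qed

lemma card_U_eq:
  "int (card U) = int m * int (run_hits 1) - int (m - 1) * int (run_hits 2)
    + int (m - 2) * int (run_hits 3) - int (m - 3) * int (run_hits 4)
    - int ((m - 1) choose 2) * int (run_pair_hits 1 1) + 2 * int ((m - 2) choose 2) * int (run_pair_hits 1 2)
    - int ((m - 3) choose 2) * int (run_pair_hits 2 2)"
proof -
  have "int (card U) = (\<Sum>x\<in>U. int (run_count 1 (trace x)) - int (run_count 2 (trace x))
      + int (run_count 3 (trace x)) - int (run_count 4 (trace x)) - int (run_pair_count 1 1 (trace x))
      + int (run_pair_count 1 2 (trace x)) + int (run_pair_count 2 1 (trace x))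
      - int (run_pair_count 2 2 (trace x)))"
    using alternating_run_count[OF short_run_shape_trace] by simp
  also have "\<dots> = int m * int (run_hits 1) - int (m - 1) * int (run_hits 2)
    + int (m - 2) * int (run_hits 3) - int (m - 3) * int (run_hits 4)
    - int ((m - 1) choose 2) * int (run_pair_hits 1 1) + int ((m - 2) choose 2) * int (run_pair_hits 1 2)
    + int ((m - 2) choose 2) * int (run_pair_hits 2 1) - int ((m - 3) choose 2) * int (run_pair_hits 2 2)"
    by (simp add: sum_subtractf sum.distrib sum_run_count sum_run_pair_count numeral_2_eq_2 numeral_3_eq_3
      flip: of_nat_sum)
  finally show ?thesis
    using run_pair_hits_commute[of 2 1] seven_le_m by simp
qed

lemma sum_of_bool_subset_trace:
  "(\<Sum>x\<in>hitting W. of_bool (T \<subseteq> trace x) :: int) = int (hits (W \<union> T))"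
proof -
  have "hitting W \<inter> {x. T \<subseteq> trace x} = hitting (W \<union> T)"
    by (auto simp: hitting_def)
  then show ?thesis
    using finite_hitting by simp
qed

lemma hits_eq_run_hits:
  assumes "T \<noteq> {}" "T \<subseteq> {1..m}" "card T = Suc (Max T) - Min T"
  shows "hits T = run_hits (Suc (Max T) - Min T)"
proof -
  have "finite T"
    using assms(2) finite_subset by blast
  then have "0 < Min T" "Max T \<le> m" "0 < card T"
    using assms(1,2) by (auto simp: card_gt_0_iff)
  moreover have "T = {Min T..<Min T + card T}"
    using \<open>finite T\<close> assms(1,3) by (rule eq_atLeastLessThan_Min_card)
  ultimately show ?thesis
    using assms(3) hits_run[of T "Min T" "card T"] by simp
qed

lemma hits_Un_intervals:
  assumes "L \<noteq> {}" "R \<noteq> {}" "L \<subseteq> {1..m}" "R \<subseteq> {1..m}" "Suc (Max L) < Min R"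
    "card L = Suc (Max L) - Min L" "card R = Suc (Max R) - Min R"
  shows "hits (L \<union> R) = run_pair_hits (card L) (card R)"
proof -
  have "finite L" "finite R"
    using assms(3,4) finite_subset by blast+
  then have "0 < Min L" "Max R \<le> m" "0 < card L" "0 < card R"
    using assms(1-4) by (auto simp: card_gt_0_iff)
  moreover have "L = {Min L..<Min L + card L}" "R = {Min R..<Min R + card R}"
    using \<open>finite L\<close> \<open>finite R\<close> assms(1,2,6,7) eq_atLeastLessThan_Min_card by blast+
  ultimately show ?thesis
    using assms(5-7) hits_run_pair[of "L \<union> R" "Min L" "card L" "Min R" "card R"] by simp
qed

text \<open>The far runs start in \<open>{1..a - l - 1}\<close> or in \<open>{a + k + 1..m + 1 - l}\<close>.\<close>
lemma sum_far_run_count: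
  assumes "W \<subseteq> {a..<a + k}" "0 < a" "0 < k" "0 < l" "a + k \<le> m + 1"
  shows "(\<Sum>x\<in>hitting W. far_run_count a k l (trace x))
    = (a - Suc l + (m + 1 - l - (a + k))) * run_pair_hits k l"
proof -
  let ?J = "{1..a - Suc l} \<union> {Suc (a + k)..m + 1 - l}"
  show ?thesis
  proof (rule sum_count_in_patterns_const[where J = ?J and T = "\<lambda>j. {a..<a + k} \<union> {j..<j + l}"])
    show "card ?J = a - Suc l + (m + 1 - l - (a + k))"
      by (subst card_Un_disjoint) auto
    show "hits (W \<union> ({a..<a + k} \<union> {j..<j + l})) = run_pair_hits k l" if "j \<in> ?J" for j
    proof -
      have "W \<union> ({a..<a + k} \<union> {j..<j + l}) = {a..<a + k} \<union> {j..<j + l}"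
        using assms(1) by blast
      moreover have "hits ({a..<a + k} \<union> {j..<j + l}) = run_pair_hits k l"
      proof (cases "j < a")
        case True
        then have "hits ({j..<j + l} \<union> {a..<a + k}) = run_pair_hits l k"
          using that assms by (intro hits_run_pair[of _ j l a k]) auto
        moreover have "run_pair_hits l k = run_pair_hits k l"
          using True that assms by (intro run_pair_hits_commute) auto
        ultimately show ?thesis
          by (simp add: Un_commute)
      next
        case False
        then show ?thesis
          using that assms by (intro hits_run_pair[of _ a k j l]) auto
      qed
      ultimately show ?thesis
        by simp
    qed
    show "far_run_count a k l (trace x) = count_in ?J (\<lambda>j. {a..<a + k} \<union> {j..<j + l} \<subseteq> trace x)"
      for x
    proof -
      have "j \<in> trace x \<and> {a..<a + k} \<subseteq> trace x \<and> {j..<j + l} \<subseteq> trace x \<and> (j + l < a \<or> a + k < j)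
          \<longleftrightarrow> j \<in> ?J \<and> {a..<a + k} \<union> {j..<j + l} \<subseteq> trace x" for j
        using run_subset_trace[OF assms(4), of j x] by auto
      then show ?thesis
        unfolding far_run_count_def count_in_def by (intro arg_cong[where f = card]) auto
    qed
  qed simp
qed

text \<open>The numbers of elements whose trace is exactly \<open>{4}\<close>, \<open>{4, 5}\<close>, \<open>{2, 6}\<close> and \<open>{2, 6, 7}\<close>;
  \<open>run_pair_hits 2 2\<close> is the corresponding number for \<open>{1, 2, 4, 5}\<close>, which has no proper
  superset that a trace can contain.\<close>

definition exact_singleton :: int where
  "exact_singleton = int (run_hits 1) - 2 * int (run_hits 2) + 3 * int (run_hits 3) - 4 * int (run_hits 4)
    - (int m - 3) * int (run_pair_hits 1 1) + (3 * int m - 13) * int (run_pair_hits 1 2)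
    - (2 * int m - 12) * int (run_pair_hits 2 2)"

definition exact_pair :: int where
  "exact_pair = int (run_hits 2) - 2 * int (run_hits 3) + 3 * int (run_hits 4)
    - (int m - 4) * int (run_pair_hits 1 2) + (int m - 6) * int (run_pair_hits 2 2)"

definition exact_two_singletons :: int where
  "exact_two_singletons =
    int (run_pair_hits 1 1) - 4 * int (run_pair_hits 1 2) + 4 * int (run_pair_hits 2 2)"

definition exact_singleton_pair :: int where
  "exact_singleton_pair = int (run_pair_hits 1 2) - 2 * int (run_pair_hits 2 2)"

lemma sum_interior_singleton_weight:
  "(\<Sum>x\<in>hitting {4}. interior_singleton_weight (trace x)) = exact_singleton"
  unfolding interior_singleton_weight_def
  using seven_le_m run_pair_hits_commute[of 2 1]
  by (simp only: sum.distrib sum_subtractf sum_of_bool_subset_trace flip: of_nat_sum)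
    (simp add: exact_singleton_def sum_far_run_count hits_eq_run_hits algebra_simps)

lemma sum_interior_pair_weight:
  "(\<Sum>x\<in>hitting {4, 5}. interior_pair_weight (trace x)) = exact_pair"
  unfolding interior_pair_weight_def
  using seven_le_m run_pair_hits_commute[of 2 1]
  by (simp only: sum.distrib sum_subtractf sum_of_bool_subset_trace flip: of_nat_sum)
    (simp add: exact_pair_def sum_far_run_count hits_eq_run_hits algebra_simps)

lemma sum_boundary_singleton_weight:
  "(\<Sum>x\<in>hitting {1}. boundary_singleton_weight (trace x))
    = exact_singleton + exact_pair - exact_two_singletons - exact_singleton_pair"
  unfolding boundary_singleton_weight_def
  using seven_le_m run_pair_hits_commute[of 2 1]
  by (simp only: sum.distrib sum_subtractf sum_of_bool_subset_trace flip: of_nat_sum)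
    (simp add: exact_singleton_def exact_pair_def exact_two_singletons_def exact_singleton_pair_def
      sum_far_run_count hits_eq_run_hits; simp add: algebra_simps numeral_2_eq_2)

lemma sum_two_singletons_weight:
  "(\<Sum>x\<in>hitting {2, 6}. two_singletons_weight (trace x)) = exact_two_singletons"
  unfolding two_singletons_weight_def
  using seven_le_m run_pair_hits_commute[of 2 1]
    hits_Un_intervals[of "{2}" "{6}"] hits_Un_intervals[of "{1, 2}" "{6}"]
    hits_Un_intervals[of "{2, 3}" "{6}"] hits_Un_intervals[of "{2}" "{5, 6}"]
    hits_Un_intervals[of "{2}" "{6, 7}"] hits_Un_intervals[of "{1, 2}" "{5, 6}"]
    hits_Un_intervals[of "{1, 2}" "{6, 7}"] hits_Un_intervals[of "{2, 3}" "{5, 6}"]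
    hits_Un_intervals[of "{2, 3}" "{6, 7}"]
  by (simp only: sum.distrib sum_subtractf sum_of_bool_subset_trace)
    (simp add: exact_two_singletons_def insert_commute numeral_2_eq_2)

lemma sum_singleton_pair_weight:
  "(\<Sum>x\<in>hitting {2, 6, 7}. singleton_pair_weight (trace x)) = exact_singleton_pair"
  unfolding singleton_pair_weight_def
  using seven_le_m run_pair_hits_commute[of 2 1] hits_Un_intervals[of "{2}" "{6, 7}"]
    hits_Un_intervals[of "{1, 2}" "{6, 7}"] hits_Un_intervals[of "{2, 3}" "{6, 7}"]
  by (simp only: sum.distrib sum_subtractf sum_of_bool_subset_trace)
    (simp add: exact_singleton_pair_def insert_commute numeral_2_eq_2)

lemma nonconsecutive_triple_not_subset_trace:
  assumes "x \<in> U" "i + 2 \<le> j" "j + 2 \<le> k"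
  shows "\<not> {i, j, k} \<subseteq> trace x"
  using no_nonconsecutive_triple_trace[OF assms(1)] assms(2,3) unfolding no_nonconsecutive_triple_def
  by blast

lemma exact_singleton_nonneg: "0 \<le> exact_singleton"
  unfolding sum_interior_singleton_weight[symmetric]
  by (rule sum_nonneg)
    (simp add: hitting_def interior_singleton_weight_nonneg short_run_shape_trace zero_notin_trace)

lemma exact_pair_nonneg: "0 \<le> exact_pair"
  unfolding sum_interior_pair_weight[symmetric]
  by (rule sum_nonneg) (simp add: hitting_def interior_pair_weight_nonneg short_run_shape_trace)

lemma exact_two_runs_le_exact_one_run:
  "exact_two_singletons + exact_singleton_pair \<le> exact_singleton + exact_pair"
proof -
  have "0 \<le> (\<Sum>x\<in>hitting {1}. boundary_singleton_weight (trace x))"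
    by (rule sum_nonneg)
      (simp add: hitting_def boundary_singleton_weight_nonneg short_run_shape_trace zero_notin_trace)
  then show ?thesis
    unfolding sum_boundary_singleton_weight by linarith
qed

lemma exact_two_singletons_nonneg: "0 \<le> exact_two_singletons"
  unfolding sum_two_singletons_weight[symmetric]
proof (rule sum_nonneg)
  fix x
  assume "x \<in> hitting {2, 6}"
  then have "x \<in> U" "{2, 6} \<subseteq> trace x"
    by (auto simp: hitting_def)
  then show "0 \<le> two_singletons_weight (trace x)"
    using nonconsecutive_triple_not_subset_trace[of x 1 3 6]
      nonconsecutive_triple_not_subset_trace[of x 2 5 7]
    by (intro two_singletons_weight_nonneg) auto
qed

lemma exact_singleton_pair_nonneg: "0 \<le> exact_singleton_pair"
  unfolding sum_singleton_pair_weight[symmetric]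
proof (rule sum_nonneg)
  fix x
  assume "x \<in> hitting {2, 6, 7}"
  then have "x \<in> U" "{2, 6, 7} \<subseteq> trace x"
    by (auto simp: hitting_def)
  then show "0 \<le> singleton_pair_weight (trace x)"
    using nonconsecutive_triple_not_subset_trace[of x 1 3 6] by (intro singleton_pair_weight_nonneg) auto
qed

lemma double_card_U_eq:
  "2 * int (card U) = 2 * int m * exact_singleton + 2 * (int m + 1) * exact_pair
    + (int m * int m - 3 * int m - 2) * exact_two_singletons
    + 2 * (int m + 1) * (int m - 2) * exact_singleton_pair
    + int m * (int m + 1) * int (run_pair_hits 2 2)"
proof -
  define K1 K2 K3 where "K1 = int ((m - 1) choose 2)" and "K2 = int ((m - 2) choose 2)"
    and "K3 = int ((m - 3) choose 2)"
  have K: "2 * K1 = (int m - 1) * (int m - 2)" "2 * K2 = (int m - 2) * (int m - 3)"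
    "2 * K3 = (int m - 3) * (int m - 4)"
    unfolding K1_def K2_def K3_def using seven_le_m two_mul_int_choose_two[of "m - 1"]
      two_mul_int_choose_two[of "m - 2"] two_mul_int_choose_two[of "m - 3"]
    by simp_all
  have "2 * int (card U) = 2 * int m * int (run_hits 1) - 2 * int (m - 1) * int (run_hits 2)
    + 2 * int (m - 2) * int (run_hits 3) - 2 * int (m - 3) * int (run_hits 4)
    - (2 * K1) * int (run_pair_hits 1 1) + 2 * (2 * K2) * int (run_pair_hits 1 2)
    - (2 * K3) * int (run_pair_hits 2 2)"
    unfolding card_U_eq K1_def K2_def K3_def by (simp add: algebra_simps)
  also have "\<dots> = 2 * int m * int (run_hits 1) - 2 * int (m - 1) * int (run_hits 2)
    + 2 * int (m - 2) * int (run_hits 3) - 2 * int (m - 3) * int (run_hits 4)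
    - (int m - 1) * (int m - 2) * int (run_pair_hits 1 1)
    + 2 * ((int m - 2) * (int m - 3)) * int (run_pair_hits 1 2)
    - (int m - 3) * (int m - 4) * int (run_pair_hits 2 2)"
    by (simp only: K)
  finally show ?thesis
    using seven_le_m
    by (simp add: exact_singleton_def exact_pair_def exact_two_singletons_def exact_singleton_pair_def
        algebra_simps)
qed

end

theorem lemma4p26:
  fixes U :: "'a set" and A :: "nat \<Rightarrow> 'a set" and m :: nat
  assumes "is_set_system U A m"
    and "complete_system U A m"
    and "harmonic U A m"
    and "card U < m * (m - 2)"
    and "m \<ge> 51"
    and "\<forall>I. I \<subseteq> {1..m} \<and> card I = 3 \<and> nonconsecutive I \<longrightarrow> HI U A I = {}"
  shows "\<exists>a b c d :: nat. card U = a * m + b * (m + 1) + c * (m choose 2)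
           + d * ((m + 1) * (m - 2) div 2)"
proof -
  interpret harmonic_trace_system U A m
    using assms by unfold_locales (auto simp: is_set_system_def)
  show ?thesis
    using assms(4,5) exact_singleton_nonneg exact_pair_nonneg exact_two_singletons_nonneg
      exact_singleton_pair_nonneg exact_two_runs_le_exact_one_run double_card_U_eq
    by (intro nat_combination_if_weighted_sum_small[of m "card U" exact_singleton exact_pair
          exact_two_singletons exact_singleton_pair "int (run_pair_hits 2 2)"]) auto
qed

end
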